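(* For the iterates of ARDCA (context) and every $k\ge0$, $$u^{k+1}=\frac{\theta_k}{\theta_0}z^{k+1}+\theta_k\sum_{t=1}^k\left(\frac{\theta_t(1-\theta_0)^{k-t}}{\theta_{t-1}^2}-\frac{(1-\theta_0)^{k+1-t}}{\theta_{t-1}}\right)u^t,$$ where each coefficient $\frac{\theta_t(1-\theta_0)^{k-t}}{\theta_{t-1}^2}-\frac{(1-\theta_0)^{k+1-t}}{\theta_{t-1}}$ ($1\le t\le k$) is positive and $$\frac{\theta_k}{\theta_0}+\theta_k\sum_{t=1}^k\left(\frac{\theta_t(1-\theta_0)^{k-t}}{\theta_{t-1}^2}-\frac{(1-\theta_0)^{k+1-t}}{\theta_{t-1}}\right)=1.$$
   Context: $\widehat n\ge1$ is an integer; $\theta_0=1/\widehat n$, $\theta_{k+1}=\frac{\sqrt{\theta_k^4+4\theta_k^2}-\theta_k^2}{2}$ (so $\frac{1-\theta_k}{\theta_k^2}=\frac1{\theta_{k-1}^2}$, with convention $1/\theta_{-1}^2=\widehat n^2-\widehat n$). ARDCA generates vectors in $\mathbb{R}^{\widehat n}$ by: $z^0=u^0$; for $k\ge0$, $v^k=\theta_kz^k+(1-\theta_k)u^k$; $z^{k+1}$ differs from $z^k$ in at most one coordinate $i_k$ (chosen at random, with $z^{k+1}_{i_k}$ given by a coordinate proximal step on the dual objective); $u^{k+1}=v^k+\widehat n\theta_k(z^{k+1}-z^k)$. (The identity only uses the relations $z^0=u^0$, $v^k=\theta_kz^k+(1-\theta_k)u^k$, $u^{k+1}=v^k+\widehat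 n\theta_k(z^{k+1}-z^k)$ and the definition of $\theta_k$.) *)

theory Defs
  imports "HOL-Analysis.Analysis"
begin

fun ardca_theta :: "nat \<Rightarrow> nat \<Rightarrow> real" where
  "ardca_theta nh 0 = 1 / real nh"
| "ardca_theta nh (Suc k) =
     (sqrt ((ardca_theta nh k)^4 + 4 * (ardca_theta nh k)^2) - (ardca_theta nh k)^2) / 2"

end

theory Submission
  imports Defs
begin

text \<open>When \<open>k\<close> grows by one, the old weights of \<open>u\<^sup>1, \<dots>, u\<^sup>k\<close> all shrink by the factor
  \<open>1 - \<theta>\<^sub>0\<close> and \<open>u\<^sup>k\<^sup>+\<^sup>1\<close> enters with a new weight; together with the step relation
  \<open>\<theta>\<^sub>k\<^sub>+\<^sub>1\<^sup>2 = (1 - \<theta>\<^sub>k\<^sub>+\<^sub>1) \<theta>\<^sub>k\<^sup>2\<close> this makes the expansion an induction on \<open>k\<close> that uses only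
  the linear recursion of the iterates, not the coordinate structure of the steps of \<open>z\<close>.
  Constant sequences satisfy that recursion, so the expansion applied to them gives the
  normalisation of the weights. Positivity of the weights amounts to
  \<open>(1 - \<theta>\<^sub>0) \<theta>\<^sub>t\<^sub>-\<^sub>1 < \<theta>\<^sub>t\<close>, which holds because the \<open>\<theta>\<^sub>t\<close> decrease and
  \<open>(1 - \<theta>\<^sub>0)\<^sup>2 < 1 - \<theta>\<^sub>0\<close>.\<close>

lemma positive_root_step:
  fixes a :: real
  assumes "a > 0"
  defines "b \<equiv> (sqrt (a^4 + 4 * a^2) - a^2) / 2"
  shows "b > 0" and "b^2 = (1 - b) * a^2"
proof -
  define s where "s = sqrt (a^4 + 4 * a^2)"
  have s_sq: "s^2 = a^4 + 4 * a^2" and "s \<ge> 0"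
    unfolding s_def by simp_all
  moreover have "(a^2)^2 < s^2"
    using s_sq \<open>a > 0\<close> by (simp add: power2_eq_square power4_eq_xxxx)
  ultimately have "a^2 < s"
    using power2_less_imp_less by blast
  then show "b > 0"
    unfolding b_def s_def[symmetric] by simp
  show "b^2 = (1 - b) * a^2"
    unfolding b_def s_def[symmetric] using s_sq
    by (simp add: power2_eq_square power4_eq_xxxx field_simps)
qed

locale ardca_stepsizes =
  fixes \<theta> :: "nat \<Rightarrow> real"
  assumes pos: "\<theta> k > 0"
    and Suc_sq: "(\<theta> (Suc k))^2 = (1 - \<theta> (Suc k)) * (\<theta> k)^2"
begin

definition weight :: "nat \<Rightarrow> nat \<Rightarrow> real" where
  "weight k t = \<theta> t * (1 - \<theta> 0)^(k - t) / (\<theta> (t - 1))^2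
                - (1 - \<theta> 0)^(k + 1 - t) / \<theta> (t - 1)"

lemma Suc_less: "\<theta> (Suc k) < \<theta> k"
proof -
  have "(1 - \<theta> (Suc k)) * (\<theta> k)^2 < (\<theta> k)^2"
    using pos[of k] pos[of "Suc k"] by (simp add: algebra_simps)
  then have "(\<theta> (Suc k))^2 < (\<theta> k)^2"
    by (simp add: Suc_sq)
  then show ?thesis
    using pos[of k] power2_less_imp_less by fastforce
qed

lemma le_first: "\<theta> k \<le> \<theta> 0"
  using lift_Suc_antimono_le[of \<theta> 0 k] Suc_less less_imp_le by blast

lemma shrunk_less_Suc:
  assumes "\<theta> 0 < 1"
  shows "(1 - \<theta> 0) * \<theta> k < \<theta> (Suc k)"
proof -
  have "(1 - \<theta> 0)^2 < 1 - \<theta> 0"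
    using assms pos[of 0] by (simp add: power2_eq_square)
  also have "\<dots> \<le> 1 - \<theta> (Suc k)"
    using le_first[of "Suc k"] by simp
  finally have "((1 - \<theta> 0) * \<theta> k)^2 < (\<theta> (Suc k))^2"
    using pos[of k] by (simp add: power_mult_distrib Suc_sq)
  then show ?thesis
    using pos[of "Suc k"] power2_less_imp_less by fastforce
qed

lemma weight_Suc: "t \<le> k \<Longrightarrow> weight (Suc k) t = (1 - \<theta> 0) * weight k t"
  by (simp add: weight_def Suc_diff_le algebra_simps)

lemma weight_diag: "weight (Suc k) (Suc k) = \<theta> (Suc k) / (\<theta> k)^2 - (1 - \<theta> 0) / \<theta> k"
  by (simp add: weight_def)

lemma Suc_mult_weight_diag:
  "\<theta> (Suc k) * weight (Suc k) (Suc k) = 1 - \<theta> (Suc k) - (1 - \<theta> 0) * \<theta> (Suc k) / \<theta> k"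
proof -
  have "(\<theta> (Suc k))^2 / (\<theta> k)^2 = 1 - \<theta> (Suc k)"
    using pos[of k] by (simp add: Suc_sq)
  then show ?thesis
    by (simp add: weight_diag right_diff_distrib power2_eq_square) (simp add: algebra_simps)
qed

lemma weight_pos:
  assumes "\<theta> 0 < 1" and "1 \<le> t" and "t \<le> k"
  shows "weight k t > 0"
proof -
  obtain s where t: "t = Suc s"
    using \<open>1 \<le> t\<close> by (cases t) auto
  have "weight k t = (1 - \<theta> 0)^(k - t) / \<theta> s * (\<theta> (Suc s) / \<theta> s - (1 - \<theta> 0))"
  proof -
    have "k + 1 - t = Suc (k - t)"
      using \<open>t \<le> k\<close> by simp
    then show ?thesis
      using pos[of s] unfolding weight_def t by (simp add: field_simps power2_eq_square)
  qed
  moreover have "\<theta> (Suc s) / \<theta> s - (1 - \<theta> 0) > 0"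
    using shrunk_less_Suc[OF assms(1), of s] pos[of s] by (simp add: field_simps)
  ultimately show ?thesis
    using assms(1) pos[of s] by simp
qed

lemma weighted_sum_Suc:
  fixes f :: "nat \<Rightarrow> 'a::real_vector"
  shows "(\<Sum>t = 1..Suc k. weight (Suc k) t *\<^sub>R f t)
    = (1 - \<theta> 0) *\<^sub>R (\<Sum>t = 1..k. weight k t *\<^sub>R f t) + weight (Suc k) (Suc k) *\<^sub>R f (Suc k)"
proof -
  have "(\<Sum>t = 1..k. weight (Suc k) t *\<^sub>R f t) = (\<Sum>t = 1..k. (1 - \<theta> 0) *\<^sub>R (weight k t *\<^sub>R f t))"
    by (rule sum.cong) (simp_all add: weight_Suc)
  then show ?thesis
    by (simp add: sum.cl_ivl_Suc scaleR_sum_right)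
qed

theorem iterate_expansion:
  fixes z u :: "nat \<Rightarrow> 'a::real_vector"
  assumes z0: "z 0 = u 0"
    and u_Suc: "\<And>k. u (Suc k) = \<theta> k *\<^sub>R z k + (1 - \<theta> k) *\<^sub>R u k
                                  + (\<theta> k / \<theta> 0) *\<^sub>R (z (Suc k) - z k)"
  shows "u (Suc k) = (\<theta> k / \<theta> 0) *\<^sub>R z (Suc k) + \<theta> k *\<^sub>R (\<Sum>t = 1..k. weight k t *\<^sub>R u t)"
proof (induction k)
  case 0
  show ?case
    using u_Suc[of 0] z0 pos[of 0] by (simp add: algebra_simps)
next
  case (Suc k)
  define S where "S = (\<Sum>t = 1..k. weight k t *\<^sub>R u t)"
  define a b \<rho> where "a = \<theta> k" and "b = \<theta> (Suc k)" and "\<rho> = 1 - \<theta> 0"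
  have "a \<noteq> 0" "\<theta> 0 \<noteq> 0"
    unfolding a_def using pos by (simp_all add: less_imp_neq[symmetric])
  have aS: "a *\<^sub>R S = u (Suc k) - (a / \<theta> 0) *\<^sub>R z (Suc k)"
    using Suc.IH unfolding S_def a_def by simp
  have "b *\<^sub>R (\<Sum>t = 1..Suc k. weight (Suc k) t *\<^sub>R u t)
      = (b * \<rho> / a) *\<^sub>R (a *\<^sub>R S) + (b * weight (Suc k) (Suc k)) *\<^sub>R u (Suc k)"
    using \<open>a \<noteq> 0\<close> unfolding weighted_sum_Suc S_def \<rho>_def
    by (simp add: scaleR_add_right)
  also have "\<dots> = (b * \<rho> / a) *\<^sub>R u (Suc k) - (b * \<rho> / \<theta> 0) *\<^sub>R z (Suc k)
                    + (1 - b - \<rho> * b / a) *\<^sub>R u (Suc k)"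
    unfolding aS b_def Suc_mult_weight_diag using \<open>a \<noteq> 0\<close>
    by (simp add: scaleR_diff_right a_def \<rho>_def)
  also have "\<dots> = (1 - b) *\<^sub>R u (Suc k) - (b * \<rho> / \<theta> 0) *\<^sub>R z (Suc k)"
    by (simp add: algebra_simps)
  also have "\<dots> = b *\<^sub>R z (Suc k) + (1 - b) *\<^sub>R u (Suc k) - (b / \<theta> 0) *\<^sub>R z (Suc k)"
    using \<open>\<theta> 0 \<noteq> 0\<close> unfolding \<rho>_def by (simp add: algebra_simps diff_divide_distrib)
  finally show ?case
    unfolding u_Suc[of "Suc k"] b_def[symmetric] by (simp add: algebra_simps)
qed

end

lemma ardca_stepsizes_ardca_theta:
  assumes "nh \<ge> 1"
  shows "ardca_stepsizes (ardca_theta nh)"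
proof -
  have "ardca_theta nh k > 0" for k
  proof (induction k)
    case (Suc k)
    show ?case
      unfolding ardca_theta.simps by (rule positive_root_step(1)[OF Suc.IH])
  qed (use assms in simp)
  then show ?thesis
    by unfold_locales (simp_all add: positive_root_step(2))
qed

theorem lemma9:
  fixes z u v :: "nat \<Rightarrow> real ^ 'n"
  defines "nh \<equiv> CARD('n)"
  defines "\<theta> \<equiv> ardca_theta nh"
  assumes z0: "z 0 = u 0"
    and v_def: "\<And>k. v k = \<theta> k *\<^sub>R z k + (1 - \<theta> k) *\<^sub>R u k"
    and z_step: "\<And>k. \<exists>i. \<forall>j. j \<noteq> i \<longrightarrow> z (Suc k) $ j = z k $ j"
    and u_step: "\<And>k. u (Suc k) = v k + (real nh * \<theta> k) *\<^sub>R (z (Suc k) - z k)"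
  shows "(\<forall>k. u (Suc k) =
            (\<theta> k / \<theta> 0) *\<^sub>R z (Suc k)
            + \<theta> k *\<^sub>R (\<Sum>t = 1..k.
                 (\<theta> t * (1 - \<theta> 0)^(k - t) / (\<theta> (t - 1))^2
                  - (1 - \<theta> 0)^(k + 1 - t) / \<theta> (t - 1)) *\<^sub>R u t))
    \<and> (\<forall>k. nh \<ge> 2 \<longrightarrow> (\<forall>t \<in> {1..k}.
            \<theta> t * (1 - \<theta> 0)^(k - t) / (\<theta> (t - 1))^2
            - (1 - \<theta> 0)^(k + 1 - t) / \<theta> (t - 1) > 0))
    \<and> (\<forall>k. \<theta> k / \<theta> 0
            + \<theta> k * (\<Sum>t = 1..k.
                 \<theta> t * (1 - \<theta> 0)^(k - t) / (\<theta> (t - 1))^2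
                 - (1 - \<theta> 0)^(k + 1 - t) / \<theta> (t - 1)) = 1)"
proof -
  have "nh \<ge> 1"
    unfolding nh_def by (simp add: Suc_leI)
  interpret ardca_stepsizes \<theta>
    unfolding \<theta>_def by (rule ardca_stepsizes_ardca_theta[OF \<open>nh \<ge> 1\<close>])
  have \<theta>0: "\<theta> 0 = 1 / real nh"
    unfolding \<theta>_def by simp
  have "u (Suc k) = \<theta> k *\<^sub>R z k + (1 - \<theta> k) *\<^sub>R u k + (\<theta> k / \<theta> 0) *\<^sub>R (z (Suc k) - z k)" for k
    using u_step[of k] v_def[of k] by (simp add: \<theta>0 mult.commute)
  from iterate_expansion[OF z0 this]
  have expansion: "u (Suc k) = (\<theta> k / \<theta> 0) *\<^sub>R z (Suc k) + \<theta> k *\<^sub>R (\<Sum>t = 1..k. weight k t *\<^sub>R u t)"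
    for k .
  have normalised: "\<theta> k / \<theta> 0 + \<theta> k * (\<Sum>t = 1..k. weight k t) = 1" for k
    using iterate_expansion[of "\<lambda>_. 1::real" "\<lambda>_. 1", of k] by (simp add: algebra_simps)
  have "\<theta> 0 < 1" if "nh \<ge> 2"
    using that by (simp add: \<theta>0)
  with weight_pos expansion normalised show ?thesis
    unfolding weight_def by auto
qed

end
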